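(* Assume $\bar p=1/2$. For every distribution $\eta$ on $\mathcal R$, $\lim_{n\to\infty}E_\eta[F_{n+1}]/n=1$. Moreover there exist constants $c_1,c_2>0$ such that for every $n\in\mathbb N$ and every distribution $\eta$ on $\mathcal R$, $$\big|E_\eta[F_{n+1}]-n-(1+\eta\cdot\tilde{\mathbf r})\big|\le c_1e^{-c_2n},\qquad\text{where }\tilde{\mathbf r}=(I-K+2\mathbf p\,\mu D_pK)^{-1}(\mathbf 1-\mathbf p)-\mathbf 1.$$
   Context: Let $\mathcal R=\{1,\dots,N\}$ and let $K$ be a stochastic matrix on $\mathcal R$ whose Markov chain has a unique closed irreducible subset; let $\mu$ (row vector) be its unique stationary distribution. Fix $p:\mathcal R\to(0,1)$, $\mathbf p=(p(1),\dots,p(N))^t$, $\mathbf 1$ the all-ones column vector, $I$ the identity, $D_p$ the diagonal matrix with entries $p(i)$, $\bar p=\mu\cdot\mathbf p$. Under $P_\eta$, $(R_j)_{j\ge1}$ is a Markov chain with transition matrix $K$ and $R_1\sim\eta$, and given $(R_j)$ the $\xi(j)$ are independent Bernoulli$(p(R_j))$. $F_m=\inf\{k\ge0:\sum_{j=1}^{k+m}\xi(j)=m\}$ is the number of failures before the $m$-th success. (Equivalently $E_\eta[F_{n+1}]=E_\eta[V_1\mid V_0=n]$ for the backward branching-like process $V_i=F^i_{V_{i-1}+1}$.) *)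

theory Defs
  imports "HOL-Analysis.Analysis"
begin

text \<open>States R = {1..N} are modelled by a finite type 'n (N = CARD('n)).
 Matrices are real^'n^'n, row vectors (distributions) and column vectors are real^'n.\<close>

definition stochastic_matrix :: "real^'n^'n \<Rightarrow> bool" where
  "stochastic_matrix K \<longleftrightarrow> (\<forall>i j. K$i$j \<ge> 0) \<and> (\<forall>i. (\<Sum>j\<in>UNIV. K$i$j) = 1)"

definition prob_vector :: "real^'n \<Rightarrow> bool" where
  "prob_vector \<eta> \<longleftrightarrow> (\<forall>i. \<eta>$i \<ge> 0) \<and> (\<Sum>i\<in>UNIV. \<eta>$i) = 1"

definition step_rel :: "real^'n^'n \<Rightarrow> ('n \<times> 'n) set" where
  "step_rel K = {(i, j). K$i$j > 0}"

definition closed_set :: "real^'n^'n \<Rightarrow> 'n set \<Rightarrow> bool" where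
  "closed_set K C \<longleftrightarrow> (\<forall>i\<in>C. \<forall>j. K$i$j > 0 \<longrightarrow> j \<in> C)"

definition irreducible_set :: "real^'n^'n \<Rightarrow> 'n set \<Rightarrow> bool" where
  "irreducible_set K C \<longleftrightarrow> C \<noteq> {} \<and> (\<forall>i\<in>C. \<forall>j\<in>C. (i, j) \<in> (step_rel K)\<^sup>*)"

definition unique_closed_irreducible :: "real^'n^'n \<Rightarrow> bool" where
  "unique_closed_irreducible K \<longleftrightarrow> (\<exists>!C. closed_set K C \<and> irreducible_set K C)"

definition stationary_dist :: "real^'n^'n \<Rightarrow> real^'n \<Rightarrow> bool" where
  "stationary_dist K \<mu> \<longleftrightarrow> prob_vector \<mu> \<and> \<mu> v* K = \<mu>"

definition bern :: "real^'n \<Rightarrow> 'n \<Rightarrow> bool \<Rightarrow> real" where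
  "bern p r b = (if b then p$r else 1 - p$r)"

text \<open>Probability that, starting (already) in state r, the next states and outcomes are xs.\<close>
fun trans_prob :: "real^'n^'n \<Rightarrow> real^'n \<Rightarrow> 'n \<Rightarrow> ('n \<times> bool) list \<Rightarrow> real" where
  "trans_prob K p r [] = 1"
| "trans_prob K p r ((s, b) # xs) = K$r$s * bern p s b * trans_prob K p s xs"

text \<open>P_eta((R_1,xi(1)),...,(R_L,xi(L))) = xs : finite-dimensional distributions.\<close>
fun path_prob :: "real^'n^'n \<Rightarrow> real^'n \<Rightarrow> real^'n \<Rightarrow> ('n \<times> bool) list \<Rightarrow> real" where
  "path_prob K p \<eta> [] = 1"
| "path_prob K p \<eta> ((r, b) # xs) = \<eta>$r * bern p r b * trans_prob K p r xs"

definition successes :: "('n \<times> bool) list \<Rightarrow> nat" where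
  "successes xs = length (filter snd xs)"

text \<open>P_eta(F_m = k), where F_m = inf{k \<ge> 0. sum_{j=1}^{k+m} xi(j) = m}.\<close>
definition prob_F_eq :: "real^'n^'n \<Rightarrow> real^'n \<Rightarrow> real^'n \<Rightarrow> nat \<Rightarrow> nat \<Rightarrow> real" where
  "prob_F_eq K p \<eta> m k =
     (\<Sum>xs\<in>{xs :: ('n \<times> bool) list. length xs = k + m \<and> successes xs = m
              \<and> (\<forall>k'<k. successes (take (k' + m) xs) \<noteq> m)}. path_prob K p \<eta> xs)"

definition expect_F :: "real^'n^'n \<Rightarrow> real^'n \<Rightarrow> real^'n \<Rightarrow> nat \<Rightarrow> real" where
  "expect_F K p \<eta> m = (\<Sum>k. real k * prob_F_eq K p \<eta> m k)"

definition diag_mat :: "real^'n \<Rightarrow> real^'n^'n" where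
  "diag_mat p = (\<chi> i j. if i = j then p$i else 0)"

definition outer :: "real^'n \<Rightarrow> real^'n \<Rightarrow> real^'n^'n" where
  "outer a b = (\<chi> i j. a$i * b$j)"

definition r_tilde :: "real^'n^'n \<Rightarrow> real^'n \<Rightarrow> real^'n \<Rightarrow> real^'n" where
  "r_tilde K p \<mu> =
     matrix_inv (mat 1 - K + 2 *\<^sub>R outer p (\<mu> v* (diag_mat p ** K))) *v (vec 1 - p) - vec 1"

end

theory Submission
  imports Defs
begin

text \<open>Let \<open>f\<^sub>m(s)\<close> be the mean number of failures before the \<open>m\<close>-th success when
  \<open>R\<^sub>1 = s\<close>. Conditioning on the first trial gives
  \<open>f\<^sub>m\<^sub>+\<^sub>1 = p K f\<^sub>m + (1 - p)(K f\<^sub>m\<^sub>+\<^sub>1 + 1)\<close>. Since \<open>p\<close> has mean \<open>1/2\<close> under \<open>\<mu>\<close>,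
  \<open>r = r_tilde K p \<mu>\<close> solves the Poisson equation \<open>(I - K) r = 1 - 2p\<close>, and the deviations
  \<open>d\<^sub>m = f\<^sub>m - m - r\<close> then satisfy the homogeneous first-step equation
  \<open>d\<^sub>m\<^sub>+\<^sub>1 = (1 - p) K d\<^sub>m\<^sub>+\<^sub>1 + p K d\<^sub>m\<close>. Its solution map is positive and, as some state
  is accessible from every state, obeys a Doeblin minorisation, so it contracts the
  oscillation \<open>max d - min d\<close> by a fixed factor \<open>q < 1\<close>. It also preserves the functional
  \<open>x \<mapsto> \<mu> D\<^sub>p K x\<close>, which vanishes on \<open>d\<^sub>0 = -r\<close>; as this functional is positive, every
  \<open>d\<^sub>m\<close> has entries of both signs, whence \<open>|d\<^sub>m| \<le> q\<^sup>m osc d\<^sub>0\<close>. Averaging over the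
  initial law gives the exponential bound, and the limit follows. The same contraction makes
  harmonic vectors constant, which is what makes the matrix defining \<open>r\<close> invertible.\<close>

section \<open>Markov chain structure\<close>

lemma stochastic_matrix_nonneg: "stochastic_matrix K \<Longrightarrow> 0 \<le> K$i$j"
  by (simp add: stochastic_matrix_def)

lemma stochastic_matrix_row_sum: "stochastic_matrix K \<Longrightarrow> (\<Sum>j\<in>UNIV. K$i$j) = 1"
  by (simp add: stochastic_matrix_def)

lemma matrix_vector_mult_component: "(A *v x)$i = (\<Sum>j\<in>UNIV. A$i$j * x$j)"
  by (simp add: matrix_vector_mult_def)

lemma stochastic_matrix_mult_vec_const:
  "stochastic_matrix K \<Longrightarrow> K *v vec c = vec c"
  by (simp add: vec_eq_iff matrix_vector_mult_component stochastic_matrix_row_sum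
      flip: sum_distrib_right)

lemma stochastic_matrix_mult_vec_mono:
  assumes "stochastic_matrix K" and "\<And>j. x$j \<le> y$j"
  shows "(K *v x)$i \<le> (K *v y)$i"
  unfolding matrix_vector_mult_component
  using assms by (intro sum_mono mult_left_mono) (auto simp: stochastic_matrix_nonneg)

lemma stochastic_matrix_mult_vec_le:
  assumes "stochastic_matrix K" and "\<And>j. x$j \<le> c"
  shows "(K *v x)$i \<le> c"
  using stochastic_matrix_mult_vec_mono[OF assms(1), of x "vec c"] assms
  by (simp add: stochastic_matrix_mult_vec_const)

lemma stochastic_matrix_mult_vec_ge:
  assumes "stochastic_matrix K" and "\<And>j. c \<le> x$j"
  shows "c \<le> (K *v x)$i"
  using stochastic_matrix_mult_vec_mono[OF assms(1), of "vec c" x] assms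
  by (simp add: stochastic_matrix_mult_vec_const)

lemma stochastic_matrix_mult_vec_ge_entry:
  assumes "stochastic_matrix K" and "\<And>l. 0 \<le> x$l"
  shows "K$i$j * x$j \<le> (K *v x)$i"
  unfolding matrix_vector_mult_component
  using assms by (intro member_le_sum) (auto simp: stochastic_matrix_nonneg)

lemma stochastic_matrix_ex_pos:
  assumes "stochastic_matrix K"
  obtains j where "0 < K$i$j"
proof -
  have "\<not> (\<forall>j. K$i$j \<le> 0)"
    using sum_nonpos[of UNIV "\<lambda>j. K$i$j"] stochastic_matrix_row_sum[OF assms] by auto
  with that show ?thesis by (meson not_le)
qed

lemma closed_set_rtrancl:
  assumes "closed_set K S" and "i \<in> S" and "(i, j) \<in> (step_rel K)\<^sup>*"
  shows "j \<in> S"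
  using assms(3,2) by induction (use assms(1) in \<open>auto simp: closed_set_def step_rel_def\<close>)

lemma closed_set_reachable: "closed_set K {j. (i, j) \<in> (step_rel K)\<^sup>+}"
  by (auto simp: closed_set_def step_rel_def intro: trancl_into_trancl)

lemma closed_set_contains_closed_irreducible:
  assumes "closed_set K S" and "S \<noteq> {}"
  shows "\<exists>T\<subseteq>S. closed_set K T \<and> irreducible_set K T"
  using assms
proof (induction "card S" arbitrary: S rule: less_induct)
  case less
  show ?case
  proof (cases "irreducible_set K S")
    case True
    then show ?thesis using less.prems by blast
  next
    case False
    then obtain i j where ij: "i \<in> S" "j \<in> S" "(i, j) \<notin> (step_rel K)\<^sup>*"
      using less.prems unfolding irreducible_set_def by blast
    define R where "R = {l. (i, l) \<in> (step_rel K)\<^sup>*}"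
    have "closed_set K R"
      by (auto simp: closed_set_def R_def step_rel_def intro: rtrancl_into_rtrancl)
    moreover have "R \<subseteq> S"
      using closed_set_rtrancl[OF less.prems(1) \<open>i \<in> S\<close>] by (auto simp: R_def)
    moreover have "card R < card S"
      using \<open>R \<subseteq> S\<close> ij by (intro psubset_card_mono) (auto simp: R_def)
    moreover have "R \<noteq> {}" by (auto simp: R_def)
    ultimately show ?thesis using less.hyps by (meson order_trans)
  qed
qed

lemma unique_closed_irreducible_reachable_state:
  assumes "stochastic_matrix K" and "unique_closed_irreducible K"
  obtains s where "\<And>i. (i, s) \<in> (step_rel K)\<^sup>+"
proof -
  obtain C where C: "closed_set K C" "irreducible_set K C"
    and unique: "\<And>D. closed_set K D \<Longrightarrow> irreducible_set K D \<Longrightarrow> D = C"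
    using assms(2) unfolding unique_closed_irreducible_def by metis
  obtain s where "s \<in> C" using C(2) unfolding irreducible_set_def by blast
  have "(i, s) \<in> (step_rel K)\<^sup>+" for i
  proof -
    obtain j where "0 < K$i$j" using stochastic_matrix_ex_pos[OF assms(1)] .
    then have "{j. (i, j) \<in> (step_rel K)\<^sup>+} \<noteq> {}" by (auto simp: step_rel_def)
    then show ?thesis
      using closed_set_contains_closed_irreducible[OF closed_set_reachable] unique \<open>s \<in> C\<close>
      by blast
  qed
  with that show ?thesis by blast
qed

section \<open>The first-step equation\<close>

text \<open>Conditioning on the next trial: after a failure the same quantity \<open>y\<close> is needed
  again, after a success the quantity \<open>x\<close> for one success fewer.\<close>
definition first_step_eq :: "real^'n^'n \<Rightarrow> real^'n \<Rightarrow> real^'n \<Rightarrow> real^'n \<Rightarrow> bool" where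
  "first_step_eq K p y x \<longleftrightarrow> y = (1 - p) * (K *v y) + p * (K *v x)"

lemma first_step_eq_iff:
  "first_step_eq K p y x \<longleftrightarrow> (\<forall>i. y$i = (1 - p$i) * (K *v y)$i + p$i * (K *v x)$i)"
  by (simp add: first_step_eq_def vec_eq_iff times_vec_def one_vec_def)

lemma first_step_eq_diff:
  assumes "first_step_eq K p y x" and "first_step_eq K p y' x'"
  shows "first_step_eq K p (y - y') (x - x')"
proof -
  have "y - y' = ((1 - p) * (K *v y) + p * (K *v x)) - ((1 - p) * (K *v y') + p * (K *v x'))"
    using assms unfolding first_step_eq_def by (rule arg_cong2[where f=minus])
  also have "\<dots> = (1 - p) * (K *v (y - y')) + p * (K *v (x - x'))"
    by (simp add: matrix_vector_mult_diff_distrib right_diff_distrib)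
  finally show ?thesis unfolding first_step_eq_def .
qed

lemma first_step_eq_const: "stochastic_matrix K \<Longrightarrow> first_step_eq K p (vec c) (vec c)"
  by (simp add: first_step_eq_iff stochastic_matrix_mult_vec_const algebra_simps)

definition oscillation :: "real^'n \<Rightarrow> real" where
  "oscillation x = (MAX i. x$i) - (MIN i. x$i)"

lemma max_componentE: obtains i where "x$i = (MAX j. x$j)"
proof -
  have "(MAX j. x$j) \<in> range (($) x)" by (intro Max_in) auto
  then obtain i where "(MAX j. x$j) = x$i" by blast
  with that show ?thesis by simp
qed

lemma min_componentE: obtains i where "x$i = (MIN j. x$j)"
proof -
  have "(MIN j. x$j) \<in> range (($) x)" by (intro Min_in) auto
  then obtain i where "(MIN j. x$j) = x$i" by blast
  with that show ?thesis by simp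
qed

lemma oscillation_ge: "x$i - x$j \<le> oscillation x"
  unfolding oscillation_def by (intro diff_mono) auto

lemma abs_le_oscillation:
  assumes "x$j \<le> 0" and "0 \<le> x$k"
  shows "\<bar>x$i\<bar> \<le> oscillation x"
  using oscillation_ge[of x i j] oscillation_ge[of x k i] assms by linarith

lemma nonpos_componentE:
  fixes w x :: "real^'n"
  assumes "\<And>j. 0 \<le> w$j" and "0 < w \<bullet> 1" and "w \<bullet> x = 0"
  obtains j where "x$j \<le> 0"
proof (rule ccontr)
  assume "\<not> thesis"
  with that have pos: "0 < x$j" for j by (meson not_le)
  have "\<not> (\<forall>j. w$j \<le> 0)"
  proof
    assume "\<forall>j. w$j \<le> 0"
    then have "w \<bullet> 1 \<le> 0" by (simp add: inner_vec_def one_vec_def sum_nonpos)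
    with assms(2) show False by simp
  qed
  then obtain j where "0 < w$j" by (auto simp: not_le)
  then have "0 < w \<bullet> x"
    unfolding inner_vec_def using assms(1) pos
    by (intro sum_pos2[where i=j]) (auto intro: mult_nonneg_nonneg less_imp_le)
  with assms(3) show False by simp
qed

locale bernoulli_chain =
  fixes K :: "real^'n^'n" and p :: "real^'n"
  assumes stochastic: "stochastic_matrix K"
    and p_pos: "\<And>i. 0 < p$i" and p_less_1: "\<And>i. p$i < 1"
begin

lemma first_step_eq_nonneg:
  assumes "first_step_eq K p y x" and "\<And>j. 0 \<le> x$j"
  shows "0 \<le> y$i"
proof -
  obtain i0 where i0: "y$i0 = (MIN j. y$j)" by (rule min_componentE)
  have "(1 - p$i0) * y$i0 \<le> (1 - p$i0) * (K *v y)$i0"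
    using i0 p_less_1[of i0]
    by (intro mult_left_mono stochastic_matrix_mult_vec_ge[OF stochastic]) simp_all
  moreover have "0 \<le> p$i0 * (K *v x)$i0"
    using assms(2) p_pos[of i0]
    by (intro mult_nonneg_nonneg stochastic_matrix_mult_vec_ge[OF stochastic]) simp_all
  moreover have "y$i0 = (1 - p$i0) * (K *v y)$i0 + p$i0 * (K *v x)$i0"
    using assms(1) by (simp add: first_step_eq_iff)
  moreover have "p$i0 * y$i0 = y$i0 - (1 - p$i0) * y$i0" by (simp add: algebra_simps)
  ultimately have "0 \<le> p$i0 * y$i0" by linarith
  then have "0 \<le> y$i0" using p_pos[of i0] by (simp add: zero_le_mult_iff)
  also have "\<dots> \<le> y$i" using i0 by simp
  finally show ?thesis .
qed

lemma first_step_eq_0_unique: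
  assumes "first_step_eq K p y 0"
  shows "y = 0"
proof -
  have "first_step_eq K p 0 0" by (simp add: first_step_eq_def)
  from first_step_eq_diff[OF this assms] have "first_step_eq K p (- y) 0" by simp
  from first_step_eq_nonneg[OF this] first_step_eq_nonneg[OF assms]
  show ?thesis by (simp add: vec_eq_iff order_antisym)
qed

text \<open>Doeblin minorisation: along a path to \<open>s\<close> the equation passes on to \<open>y\<close> a fixed
  fraction of \<open>x\<^sub>s\<close>, a factor \<open>p\<close> or \<open>1 - p\<close> times a transition probability per step.\<close>
lemma first_step_eq_lower_bound:
  assumes "(i, s) \<in> (step_rel K)\<^sup>+"
  shows "\<exists>c>0. \<forall>y x. first_step_eq K p y x \<longrightarrow> (\<forall>j. 0 \<le> x$j) \<longrightarrow> c * x$s \<le> y$i"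
  using assms
proof (induction rule: converse_trancl_induct)
  case (base i)
  then have Kis: "0 < K$i$s" by (simp add: step_rel_def)
  have "p$i * K$i$s * x$s \<le> y$i" if y: "first_step_eq K p y x" and x: "\<forall>j. 0 \<le> x$j" for y x
  proof -
    have "p$i * K$i$s * x$s \<le> p$i * (K *v x)$i"
      using x p_pos[of i] unfolding mult.assoc
      by (intro mult_left_mono stochastic_matrix_mult_vec_ge_entry[OF stochastic]) auto
    moreover have "0 \<le> (1 - p$i) * (K *v y)$i"
      using first_step_eq_nonneg[OF y] x p_less_1[of i]
      by (intro mult_nonneg_nonneg stochastic_matrix_mult_vec_ge[OF stochastic]) auto
    moreover have "y$i = (1 - p$i) * (K *v y)$i + p$i * (K *v x)$i"
      using y by (simp add: first_step_eq_iff)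
    ultimately show ?thesis by linarith
  qed
  moreover have "0 < p$i * K$i$s" using Kis p_pos[of i] by simp
  ultimately show ?case by blast
next
  case (step i j)
  then have Kij: "0 < K$i$j" by (simp add: step_rel_def)
  obtain c where "0 < c"
    and c: "\<And>y x. first_step_eq K p y x \<Longrightarrow> \<forall>j. 0 \<le> x$j \<Longrightarrow> c * x$s \<le> y$j"
    using step.IH by blast
  have "(1 - p$i) * K$i$j * c * x$s \<le> y$i" if y: "first_step_eq K p y x" and x: "\<forall>j. 0 \<le> x$j"
    for y x
  proof -
    have "K$i$j * (c * x$s) \<le> (K *v y)$i"
      using c[OF y x] Kij first_step_eq_nonneg[OF y] x
      by (intro order_trans[OF mult_left_mono stochastic_matrix_mult_vec_ge_entry[OF stochastic]])
        auto
    then have "(1 - p$i) * K$i$j * c * x$s \<le> (1 - p$i) * (K *v y)$i"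
      using p_less_1[of i] unfolding mult.assoc by (intro mult_left_mono) auto
    moreover have "0 \<le> p$i * (K *v x)$i"
      using x p_pos[of i]
      by (intro mult_nonneg_nonneg stochastic_matrix_mult_vec_ge[OF stochastic]) auto
    moreover have "y$i = (1 - p$i) * (K *v y)$i + p$i * (K *v x)$i"
      using y by (simp add: first_step_eq_iff)
    ultimately show ?thesis by linarith
  qed
  moreover have "0 < (1 - p$i) * K$i$j * c" using Kij p_less_1[of i] \<open>0 < c\<close> by simp
  ultimately show ?case by blast
qed

lemma first_step_eq_uniform_lower_bound:
  assumes "\<And>i. (i, s) \<in> (step_rel K)\<^sup>+"
  obtains \<delta> where "0 < \<delta>" and "\<delta> < 1"
    and "\<And>y x i. first_step_eq K p y x \<Longrightarrow> \<forall>j. 0 \<le> x$j \<Longrightarrow> \<delta> * x$s \<le> y$i"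
proof -
  obtain c where c_pos: "\<And>i. 0 < c i"
    and c: "\<And>i y x. first_step_eq K p y x \<Longrightarrow> \<forall>j. 0 \<le> x$j \<Longrightarrow> c i * x$s \<le> y$i"
    using first_step_eq_lower_bound[OF assms] by metis
  define \<delta> where "\<delta> = min (1/2) (MIN i. c i)"
  have "0 < (MIN i. c i)" using c_pos by simp
  then have "0 < \<delta>" "\<delta> < 1" by (auto simp: \<delta>_def)
  moreover have "\<delta> * x$s \<le> y$i" if "first_step_eq K p y x" "\<forall>j. 0 \<le> x$j" for y x i
  proof -
    have "\<delta> \<le> c i" by (simp add: \<delta>_def min.coboundedI2)
    then have "\<delta> * x$s \<le> c i * x$s" using that(2) by (simp add: mult_right_mono)
    with c[OF that, of i] show ?thesis by linarith
  qed
  ultimately show ?thesis using that by blast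
qed

lemma first_step_eq_oscillation_contract:
  assumes "\<And>i. (i, s) \<in> (step_rel K)\<^sup>+"
  obtains q where "0 < q" and "q < 1"
    and "\<And>y x. first_step_eq K p y x \<Longrightarrow> oscillation y \<le> q * oscillation x"
proof -
  obtain \<delta> where "0 < \<delta>" "\<delta> < 1"
    and \<delta>: "\<And>y x i. first_step_eq K p y x \<Longrightarrow> \<forall>j. 0 \<le> x$j \<Longrightarrow> \<delta> * x$s \<le> y$i"
    using first_step_eq_uniform_lower_bound[OF assms] by blast
  have "oscillation y \<le> (1 - \<delta>) * oscillation x" if y: "first_step_eq K p y x" for y x
  proof -
    define M where "M = (MAX j. x$j)"
    define m where "m = (MIN j. x$j)"
    obtain i where i: "y$i = (MAX j. y$j)" by (rule max_componentE)
    obtain k where k: "y$k = (MIN j. y$j)" by (rule min_componentE)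
    have "first_step_eq K p (y - vec m) (x - vec m)"
      using first_step_eq_diff[OF y first_step_eq_const[OF stochastic]] .
    moreover have "\<forall>j. 0 \<le> (x - vec m)$j" by (simp add: m_def)
    ultimately have low: "\<delta> * (x$s - m) \<le> y$k - m"
      by (metis \<delta> vec_component vector_minus_component)
    have "first_step_eq K p (vec M - y) (vec M - x)"
      using first_step_eq_diff[OF first_step_eq_const[OF stochastic] y] .
    moreover have "\<forall>j. 0 \<le> (vec M - x)$j" by (simp add: M_def)
    ultimately have high: "\<delta> * (M - x$s) \<le> M - y$i"
      by (metis \<delta> vec_component vector_minus_component)
    have "\<delta> * (x$s - m) + \<delta> * (M - x$s) = \<delta> * (M - m)"
      by (simp add: algebra_simps)
    with low high have "y$i - y$k \<le> (1 - \<delta>) * (M - m)"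
      by (simp add: algebra_simps)
    then show ?thesis using i k by (simp add: oscillation_def M_def m_def)
  qed
  with \<open>0 < \<delta>\<close> \<open>\<delta> < 1\<close> that[of "1 - \<delta>"] show ?thesis by simp
qed

end

text \<open>A harmonic \<open>x\<close> solves the first-step equation with itself, for any \<open>p\<close>, so its
  oscillation contracts.\<close>
lemma stochastic_matrix_harmonic_const:
  assumes "stochastic_matrix K" and "\<And>i. (i, s) \<in> (step_rel K)\<^sup>+" and "K *v x = x"
  shows "x$i = x$j"
proof -
  interpret bernoulli_chain K "vec (1/2)"
    using assms(1) by unfold_locales simp_all
  obtain q where "0 < q" and "q < 1"
    and contract: "\<And>y z. first_step_eq K (vec (1/2)) y z \<Longrightarrow> oscillation y \<le> q * oscillation z"
    by (rule first_step_eq_oscillation_contract[OF assms(2)], rule that)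
  have "first_step_eq K (vec (1/2)) x x"
    using assms(3) by (simp add: first_step_eq_iff)
  then have "oscillation x \<le> q * oscillation x" by (rule contract)
  moreover have "0 \<le> oscillation x" using oscillation_ge[of x i i] by simp
  ultimately have "(1 - q) * oscillation x \<le> 0" by (simp add: algebra_simps)
  then have "oscillation x \<le> 0" using \<open>q < 1\<close> by (simp add: mult_le_0_iff)
  then show ?thesis using oscillation_ge[of x i j] oscillation_ge[of x j i] by linarith
qed

section \<open>The vector \<open>r_tilde\<close>\<close>

lemma matrix_inv_right: "invertible A \<Longrightarrow> A ** matrix_inv A = mat 1"
  unfolding invertible_def matrix_inv_def by (rule someI_ex[THEN conjunct1])

lemma diag_mat_mult_vec: "diag_mat p *v x = p * x"
  by (simp add: vec_eq_iff matrix_vector_mult_component diag_mat_def times_vec_def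
      if_distrib[of "\<lambda>t. t * _"] cong: if_cong)

lemma outer_mult_vec: "outer a b *v x = (b \<bullet> x) *\<^sub>R a"
  by (simp add: vec_eq_iff matrix_vector_mult_component outer_def inner_vec_def
      sum_distrib_left mult_ac)

lemma stationary_inner_mult_vec:
  fixes K :: "real^'n^'n"
  shows "\<mu> v* K = \<mu> \<Longrightarrow> \<mu> \<bullet> (K *v x) = \<mu> \<bullet> x"
  by (metis dot_lmul_matrix)

text \<open>The row vector \<open>\<mu> D\<^sub>p K\<close> of the statement: its \<open>j\<close>-th entry is the probability,
  started from \<open>\<mu>\<close>, that the first trial succeeds and \<open>R\<^sub>2 = j\<close>.\<close>
definition success_weight :: "real^'n^'n \<Rightarrow> real^'n \<Rightarrow> real^'n \<Rightarrow> real^'n" where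
  "success_weight K p \<mu> = \<mu> v* (diag_mat p ** K)"

definition r_tilde_matrix :: "real^'n^'n \<Rightarrow> real^'n \<Rightarrow> real^'n \<Rightarrow> real^'n^'n" where
  "r_tilde_matrix K p \<mu> = mat 1 - K + 2 *\<^sub>R outer p (success_weight K p \<mu>)"

lemma r_tilde_eq_matrix_inv:
  "r_tilde K p \<mu> = matrix_inv (r_tilde_matrix K p \<mu>) *v (vec 1 - p) - vec 1"
  by (simp add: r_tilde_def r_tilde_matrix_def success_weight_def)

lemma success_weight_inner: "success_weight K p \<mu> \<bullet> x = \<mu> \<bullet> (p * (K *v x))"
  by (simp add: success_weight_def dot_lmul_matrix diag_mat_mult_vec flip: matrix_vector_mul_assoc)

lemma success_weight_inner_one:
  assumes "stochastic_matrix K"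
  shows "success_weight K p \<mu> \<bullet> 1 = \<mu> \<bullet> p"
  using stochastic_matrix_mult_vec_const[OF assms, of 1] by (simp add: success_weight_inner)

lemma success_weight_nonneg:
  assumes "stochastic_matrix K" and "prob_vector \<mu>" and "\<And>i. 0 \<le> p$i"
  shows "0 \<le> success_weight K p \<mu> $ j"
  using assms stochastic_matrix_nonneg[OF assms(1)]
  by (auto simp: success_weight_def vector_matrix_mult_def matrix_matrix_mult_def diag_mat_def
      prob_vector_def intro!: sum_nonneg mult_nonneg_nonneg)

lemma r_tilde_matrix_mult_vec:
  "r_tilde_matrix K p \<mu> *v y = y - K *v y + (2 * (success_weight K p \<mu> \<bullet> y)) *\<^sub>R p"
  by (simp add: r_tilde_matrix_def matrix_vector_mult_diff_rdistrib matrix_vector_mult_add_rdistrib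
      outer_mult_vec flip: scaleR_matrix_vector_assoc)

lemma stationary_inner_r_tilde_matrix_mult_vec:
  assumes "\<mu> v* K = \<mu>"
  shows "\<mu> \<bullet> (r_tilde_matrix K p \<mu> *v y) = 2 * (\<mu> \<bullet> p) * (success_weight K p \<mu> \<bullet> y)"
  using stationary_inner_mult_vec[OF assms]
  by (simp add: r_tilde_matrix_mult_vec inner_diff_right inner_add_right)

lemma stationary_first_step_eq_success_weight:
  assumes "\<mu> v* K = \<mu>" and "first_step_eq K p y x"
  shows "success_weight K p \<mu> \<bullet> y = success_weight K p \<mu> \<bullet> x"
proof -
  have "\<mu> \<bullet> y = \<mu> \<bullet> ((1 - p) * (K *v y)) + \<mu> \<bullet> (p * (K *v x))"
    using assms(2) unfolding first_step_eq_def by (metis inner_add_right)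
  also have "\<dots> = \<mu> \<bullet> y - success_weight K p \<mu> \<bullet> y + success_weight K p \<mu> \<bullet> x"
    using stationary_inner_mult_vec[OF assms(1)]
    by (simp add: success_weight_inner left_diff_distrib inner_diff_right)
  finally show ?thesis by simp
qed

lemma r_tilde_matrix_invertible:
  assumes "stochastic_matrix K" and "\<mu> v* K = \<mu>" and "\<And>i. (i, s) \<in> (step_rel K)\<^sup>+"
    and "\<mu> \<bullet> p \<noteq> 0"
  shows "invertible (r_tilde_matrix K p \<mu>)"
  unfolding invertible_left_inverse matrix_left_invertible_ker
proof (intro allI impI)
  fix y assume My: "r_tilde_matrix K p \<mu> *v y = 0"
  have "2 * (\<mu> \<bullet> p) * (success_weight K p \<mu> \<bullet> y) = 0"
    using stationary_inner_r_tilde_matrix_mult_vec[OF assms(2), of p y] My by simp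
  then have "success_weight K p \<mu> \<bullet> y = 0" using assms(4) by simp
  then have "K *v y = y" using My by (simp add: r_tilde_matrix_mult_vec)
  then have y: "y = vec (y$s)"
    using stochastic_matrix_harmonic_const[OF assms(1,3)] by (simp add: vec_eq_iff)
  have "success_weight K p \<mu> \<bullet> vec (y$s) = y$s * (success_weight K p \<mu> \<bullet> 1)"
    by (simp add: inner_vec_def sum_distrib_left mult.commute)
  with y \<open>success_weight K p \<mu> \<bullet> y = 0\<close> have "y$s * (\<mu> \<bullet> p) = 0"
    by (simp add: success_weight_inner_one[OF assms(1)])
  with assms(4) y show "y = 0" by (simp add: vec_eq_iff)
qed

lemma r_tilde_poisson:
  assumes "stochastic_matrix K" and "stationary_dist K \<mu>" and "\<And>i. (i, s) \<in> (step_rel K)\<^sup>+"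
    and "\<mu> \<bullet> p = 1/2"
  shows "r_tilde K p \<mu> - K *v r_tilde K p \<mu> = 1 - 2 *\<^sub>R p"
    and "success_weight K p \<mu> \<bullet> r_tilde K p \<mu> = 0"
proof -
  have stat: "\<mu> v* K = \<mu>" and "\<mu> \<bullet> 1 = 1"
    using assms(2) by (auto simp: stationary_dist_def prob_vector_def inner_vec_def)
  define y where "y = matrix_inv (r_tilde_matrix K p \<mu>) *v (1 - p)"
  have My: "r_tilde_matrix K p \<mu> *v y = 1 - p"
    using matrix_inv_right[OF r_tilde_matrix_invertible[OF assms(1) stat assms(3)]] assms(4)
    by (simp add: y_def matrix_vector_mul_assoc)
  then have "2 * (\<mu> \<bullet> p) * (success_weight K p \<mu> \<bullet> y) = \<mu> \<bullet> (1 - p)"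
    using stationary_inner_r_tilde_matrix_mult_vec[OF stat, of p y] by simp
  then have wy: "success_weight K p \<mu> \<bullet> y = 1/2"
    using assms(4) \<open>\<mu> \<bullet> 1 = 1\<close> by (simp add: inner_diff_right)
  have r: "r_tilde K p \<mu> = y - 1" by (simp add: r_tilde_eq_matrix_inv y_def)
  show "r_tilde K p \<mu> - K *v r_tilde K p \<mu> = 1 - 2 *\<^sub>R p"
    using My wy stochastic_matrix_mult_vec_const[OF assms(1), of 1]
    by (simp add: r r_tilde_matrix_mult_vec matrix_vector_mult_diff_distrib scaleR_2 algebra_simps)
  show "success_weight K p \<mu> \<bullet> r_tilde K p \<mu> = 0"
    using wy success_weight_inner_one[OF assms(1)] assms(4) by (simp add: r inner_diff_right)
qed

section \<open>Paths and the law of \<open>F\<^sub>m\<close>\<close>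

definition F_paths :: "nat \<Rightarrow> nat \<Rightarrow> ('n \<times> bool) list set" where
  "F_paths m k = {xs. length xs = k + m \<and> successes xs = m
     \<and> (\<forall>k'<k. successes (take (k' + m) xs) \<noteq> m)}"

lemma prob_F_eq_F_paths: "prob_F_eq K p \<eta> m k = (\<Sum>xs\<in>F_paths m k. path_prob K p \<eta> xs)"
  by (simp add: prob_F_eq_def F_paths_def)

lemma finite_F_paths: "finite (F_paths m k :: ('n::finite \<times> bool) list set)"
proof -
  have "finite {xs :: ('n \<times> bool) list. set xs \<subseteq> UNIV \<and> length xs = k + m}"
    by (rule finite_lists_length_eq) simp
  then show ?thesis by (rule finite_subset[rotated]) (auto simp: F_paths_def)
qed

lemma successes_Cons: "successes ((r, b) # ys) = (if b then Suc (successes ys) else successes ys)"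
  by (simp add: successes_def)

lemma successes_le_length: "successes xs \<le> length xs"
  by (simp add: successes_def)

lemma F_paths_0: "F_paths 0 k = (if k = 0 then {[]} else {})"
  by (auto simp: F_paths_def successes_def elim!: allE[of _ 0])

lemma Cons_True_in_F_paths_iff: "(r, True) # ys \<in> F_paths (Suc m) k \<longleftrightarrow> ys \<in> F_paths m k"
  by (simp add: F_paths_def successes_Cons)

lemma Cons_False_in_F_paths_iff:
  "(r, False) # ys \<in> F_paths (Suc m) k \<longleftrightarrow> k \<noteq> 0 \<and> ys \<in> F_paths (Suc m) (k - 1)"
proof
  assume xs: "(r, False) # ys \<in> F_paths (Suc m) k"
  then have "k \<noteq> 0"
    using successes_le_length[of ys] by (auto simp: F_paths_def successes_Cons)
  moreover have "successes (take (k' + Suc m) ys) \<noteq> Suc m" if "k' < k - 1" for k'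
    using xs that by (auto simp: F_paths_def successes_Cons elim!: allE[of _ "Suc k'"])
  ultimately show "k \<noteq> 0 \<and> ys \<in> F_paths (Suc m) (k - 1)"
    using xs by (auto simp: F_paths_def successes_Cons)
next
  assume "k \<noteq> 0 \<and> ys \<in> F_paths (Suc m) (k - 1)"
  then have k: "k \<noteq> 0" and ys: "ys \<in> F_paths (Suc m) (k - 1)" by auto
  have "successes (take (k' + Suc m) ((r, False) # ys)) \<noteq> Suc m" if "k' < k" for k'
  proof (cases k')
    case 0
    then show ?thesis using successes_le_length[of "take m ys"] by (simp add: successes_Cons)
  next
    case (Suc k'')
    then show ?thesis using ys that by (simp add: F_paths_def successes_Cons)
  qed
  then show "(r, False) # ys \<in> F_paths (Suc m) k"
    using k ys by (simp add: F_paths_def successes_Cons)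
qed

lemma sum_F_paths_Suc:
  fixes f :: "('n::finite \<times> bool) list \<Rightarrow> 'a::comm_monoid_add"
  shows "(\<Sum>xs\<in>F_paths (Suc m) k. f xs)
     = (\<Sum>r\<in>UNIV. \<Sum>ys\<in>F_paths m k. f ((r, True) # ys))
       + (if k = 0 then 0 else \<Sum>r\<in>UNIV. \<Sum>ys\<in>F_paths (Suc m) (k - 1). f ((r, False) # ys))"
proof -
  define cons where "cons b = (\<lambda>(r, ys). (r, b) # ys :: ('n \<times> bool) list)" for b
  define A where "A = cons True ` (UNIV \<times> F_paths m k)"
  define B where "B = (if k = 0 then {} else cons False ` (UNIV \<times> F_paths (Suc m) (k - 1)))"
  have inj: "inj (cons b)" for b by (auto simp: cons_def inj_def)
  have "F_paths (Suc m) k = A \<union> B"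
  proof (intro equalityI subsetI)
    fix xs :: "('n \<times> bool) list" assume xs: "xs \<in> F_paths (Suc m) k"
    then obtain r b ys where "xs = (r, b) # ys"
      by (cases xs) (auto simp: F_paths_def)
    with xs show "xs \<in> A \<union> B"
      by (cases b)
        (auto simp: A_def B_def cons_def Cons_True_in_F_paths_iff Cons_False_in_F_paths_iff)
  qed (auto simp: A_def B_def cons_def Cons_True_in_F_paths_iff Cons_False_in_F_paths_iff
      split: if_splits)
  moreover have "A \<inter> B = {}" by (auto simp: A_def B_def cons_def)
  moreover have "finite A" "finite B" by (simp_all add: A_def B_def finite_F_paths)
  ultimately have "(\<Sum>xs\<in>F_paths (Suc m) k. f xs) = sum f A + sum f B"
    by (simp add: sum.union_disjoint)
  moreover have "sum f A = (\<Sum>r\<in>UNIV. \<Sum>ys\<in>F_paths m k. f ((r, True) # ys))"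
    unfolding A_def sum.reindex[OF inj_on_subset[OF inj subset_UNIV]]
    by (simp add: sum.cartesian_product cons_def case_prod_unfold)
  moreover have "sum f B
      = (if k = 0 then 0 else \<Sum>r\<in>UNIV. \<Sum>ys\<in>F_paths (Suc m) (k - 1). f ((r, False) # ys))"
  proof (cases "k = 0")
    case False
    then show ?thesis
      unfolding B_def if_not_P[OF False] sum.reindex[OF inj_on_subset[OF inj subset_UNIV]]
      by (simp add: sum.cartesian_product cons_def case_prod_unfold)
  qed (simp add: B_def)
  ultimately show ?thesis by simp
qed

lemma trans_prob_eq_path_prob: "trans_prob K p r xs = path_prob K p (K$r) xs"
  by (cases xs) auto

lemma sum_path_prob_Cons:
  "(\<Sum>ys\<in>A. path_prob K p \<eta> ((r, b) # ys)) = \<eta>$r * bern p r b * (\<Sum>ys\<in>A. path_prob K p (K$r) ys)"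
  by (simp add: trans_prob_eq_path_prob sum_distrib_left)

lemma prob_F_eq_0: "prob_F_eq K p \<eta> 0 k = (if k = 0 then 1 else 0)"
  by (simp add: prob_F_eq_F_paths F_paths_0)

text \<open>Conditioning on the first trial: a success leaves \<open>m\<close> successes to wait for,
  a failure adds one to the count.\<close>
lemma prob_F_eq_Suc:
  "prob_F_eq K p \<eta> (Suc m) k
     = (\<Sum>r\<in>UNIV. \<eta>$r * (p$r * prob_F_eq K p (K$r) m k
         + (1 - p$r) * (if k = 0 then 0 else prob_F_eq K p (K$r) (Suc m) (k - 1))))"
proof -
  have "prob_F_eq K p \<eta> (Suc m) k
      = (\<Sum>r\<in>UNIV. \<Sum>ys\<in>F_paths m k. path_prob K p \<eta> ((r, True) # ys))
        + (if k = 0 then 0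
           else \<Sum>r\<in>UNIV. \<Sum>ys\<in>F_paths (Suc m) (k - 1). path_prob K p \<eta> ((r, False) # ys))"
    unfolding prob_F_eq_F_paths by (rule sum_F_paths_Suc)
  then show ?thesis
    by (cases "k = 0") (simp_all add: sum_path_prob_Cons bern_def sum.distrib distrib_left
        mult.assoc del: path_prob.simps flip: prob_F_eq_F_paths)
qed

section \<open>Laws and means given the initial state\<close>

text \<open>The law and the mean of \<open>F\<^sub>m\<close> given \<open>R\<^sub>1 = s\<close>, i.e. for the point mass
  \<open>axis s 1\<close> as initial law.\<close>
definition cond_prob_F :: "real^'n^'n \<Rightarrow> real^'n \<Rightarrow> nat \<Rightarrow> nat \<Rightarrow> real^'n" where
  "cond_prob_F K p m k = (\<chi> s. prob_F_eq K p (axis s 1) m k)"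

definition cond_expect_F :: "real^'n^'n \<Rightarrow> real^'n \<Rightarrow> nat \<Rightarrow> real^'n" where
  "cond_expect_F K p m = (\<chi> s. expect_F K p (axis s 1) m)"

lemma matrix_vector_mult_component_inner: "(A *v x)$i = A$i \<bullet> x"
  by (simp add: matrix_vector_mult_def inner_vec_def)

lemma sum_axis_mult: "(\<Sum>r\<in>UNIV. axis s (1::real) $ r * f r) = f s"
proof -
  have "axis s (1::real) $ r * f r = (if r = s then f r else 0)" for r by (simp add: axis_def)
  then show ?thesis by simp
qed

text \<open>The mass condition matters only for the empty path, which has probability \<open>1\<close>
  under every \<open>\<eta>\<close>.\<close>
lemma path_prob_eq_inner:
  assumes "(\<Sum>i\<in>UNIV. \<eta>$i) = 1"
  shows "path_prob K p \<eta> xs = \<eta> \<bullet> (\<chi> s. path_prob K p (axis s 1) xs)"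
proof (cases xs)
  case Nil
  then show ?thesis using assms by (simp add: inner_vec_def)
next
  case (Cons x ys)
  obtain r b where x: "x = (r, b)" by fastforce
  have "(\<chi> s. path_prob K p (axis s 1) xs) = (bern p r b * trans_prob K p r ys) *\<^sub>R axis r 1"
    by (simp add: Cons x vec_eq_iff axis_def)
  then show ?thesis by (simp add: Cons x inner_axis)
qed

lemma prob_F_eq_eq_inner:
  assumes "(\<Sum>i\<in>UNIV. \<eta>$i) = 1"
  shows "prob_F_eq K p \<eta> m k = \<eta> \<bullet> cond_prob_F K p m k"
proof -
  have "prob_F_eq K p \<eta> m k = (\<Sum>xs\<in>F_paths m k. \<Sum>s\<in>UNIV. \<eta>$s * path_prob K p (axis s 1) xs)"
    by (simp add: prob_F_eq_F_paths path_prob_eq_inner[OF assms] inner_vec_def)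
  also have "\<dots> = (\<Sum>s\<in>UNIV. \<eta>$s * (\<Sum>xs\<in>F_paths m k. path_prob K p (axis s 1) xs))"
    by (subst sum.swap) (simp add: sum_distrib_left)
  finally show ?thesis by (simp add: cond_prob_F_def inner_vec_def prob_F_eq_F_paths)
qed

lemma cond_prob_F_0: "cond_prob_F K p 0 k $ s = (if k = 0 then 1 else 0)"
  by (simp add: cond_prob_F_def prob_F_eq_0)

lemma cond_prob_F_Suc:
  assumes "stochastic_matrix K"
  shows "cond_prob_F K p (Suc m) k $ s
    = p$s * (K *v cond_prob_F K p m k)$s
      + (1 - p$s) * (if k = 0 then 0 else (K *v cond_prob_F K p (Suc m) (k - 1))$s)"
proof -
  have "cond_prob_F K p (Suc m) k $ s = prob_F_eq K p (axis s 1) (Suc m) k"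
    by (simp add: cond_prob_F_def)
  also have "\<dots> = p$s * (K *v cond_prob_F K p m k)$s
      + (1 - p$s) * (if k = 0 then 0 else (K *v cond_prob_F K p (Suc m) (k - 1))$s)"
    by (subst prob_F_eq_Suc) (simp add: sum_axis_mult matrix_vector_mult_component_inner
        prob_F_eq_eq_inner[OF stochastic_matrix_row_sum[OF assms]])
  finally show ?thesis .
qed

lemma matrix_vector_mult_sum: "A *v (\<Sum>a\<in>S. f a) = (\<Sum>a\<in>S. A *v f a)"
  by (induction S rule: infinite_finite_induct) (simp_all add: matrix_vector_right_distrib)

lemma cond_prob_F_partial_sum_Suc:
  assumes "stochastic_matrix K"
  shows "(\<Sum>k<Suc N. w k * cond_prob_F K p (Suc m) k $ s)
    = p$s * (K *v (\<Sum>k<Suc N. w k *\<^sub>R cond_prob_F K p m k))$s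
      + (1 - p$s) * (K *v (\<Sum>k<N. w (Suc k) *\<^sub>R cond_prob_F K p (Suc m) k))$s"
proof -
  have mult_sum: "(K *v (\<Sum>k<N'. w' k *\<^sub>R cond_prob_F K p m' k))$s
      = (\<Sum>k<N'. w' k * (K *v cond_prob_F K p m' k)$s)" for N' w' m'
    by (simp add: matrix_vector_mult_sum matrix_vector_mult_scaleR)
  have "(\<Sum>k<Suc N. w k * cond_prob_F K p (Suc m) k $ s)
      = p$s * (\<Sum>k<Suc N. w k * (K *v cond_prob_F K p m k)$s)
        + (1 - p$s) * (\<Sum>k<Suc N. w k *
            (if k = 0 then 0 else (K *v cond_prob_F K p (Suc m) (k - 1))$s))"
    by (simp add: cond_prob_F_Suc[OF assms] distrib_left sum.distrib sum_distrib_left mult_ac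
        del: sum.lessThan_Suc)
  also have "(\<Sum>k<Suc N. w k * (if k = 0 then 0 else (K *v cond_prob_F K p (Suc m) (k - 1))$s))
      = (\<Sum>k<N. w (Suc k) * (K *v cond_prob_F K p (Suc m) k)$s)"
    by (subst sum.lessThan_Suc_shift) simp
  finally show ?thesis by (simp only: mult_sum)
qed

lemma cond_prob_F_Suc_sums:
  assumes "stochastic_matrix K"
    and "\<And>j. (\<lambda>k. w k * cond_prob_F K p m k $ j) sums a$j"
    and "\<And>j. (\<lambda>k. w (Suc k) * cond_prob_F K p (Suc m) k $ j) sums b$j"
  shows "(\<lambda>k. w k * cond_prob_F K p (Suc m) k $ s) sums (p$s * (K *v a)$s + (1 - p$s) * (K *v b)$s)"
  unfolding sums_def
proof (rule LIMSEQ_imp_Suc)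
  have "(\<lambda>N. \<Sum>k<Suc N. w k *\<^sub>R cond_prob_F K p m k) \<longlonglongrightarrow> a"
    by (rule vec_tendstoI) (use LIMSEQ_Suc[OF assms(2)[unfolded sums_def]] in simp)
  moreover have "(\<lambda>N. \<Sum>k<N. w (Suc k) *\<^sub>R cond_prob_F K p (Suc m) k) \<longlonglongrightarrow> b"
    by (rule vec_tendstoI) (use assms(3)[unfolded sums_def] in simp)
  ultimately show "(\<lambda>N. \<Sum>k<Suc N. w k * cond_prob_F K p (Suc m) k $ s)
      \<longlonglongrightarrow> p$s * (K *v a)$s + (1 - p$s) * (K *v b)$s"
    unfolding cond_prob_F_partial_sum_Suc[OF assms(1)] matrix_vector_mult_component
    by (intro tendsto_intros)
qed

context bernoulli_chain
begin

lemma bern_nonneg: "0 \<le> bern p r b"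
  using p_pos[of r] p_less_1[of r] by (simp add: bern_def)

lemma trans_prob_nonneg: "0 \<le> trans_prob K p r xs"
  by (induction xs arbitrary: r)
    (auto simp: stochastic_matrix_nonneg[OF stochastic] bern_nonneg intro!: mult_nonneg_nonneg)

lemma cond_prob_F_nonneg: "0 \<le> cond_prob_F K p m k $ s"
proof -
  have "0 \<le> path_prob K p (axis s 1) xs" for xs
    by (cases xs) (auto simp: axis_def bern_nonneg trans_prob_nonneg)
  then show ?thesis by (simp add: cond_prob_F_def prob_F_eq_F_paths sum_nonneg)
qed

lemma cond_prob_F_partial_sum_le_1: "(\<Sum>k<N. cond_prob_F K p m k $ s) \<le> 1"
proof (induction m arbitrary: N s)
  case 0
  show ?case by (simp add: cond_prob_F_0)
next
  case (Suc m)
  note IH_m = Suc.IH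
  show ?case
  proof (induction N arbitrary: s)
    case (Suc N)
    have "(\<Sum>k<Suc N. cond_prob_F K p (Suc m) k $ s)
        = p$s * (K *v (\<Sum>k<Suc N. cond_prob_F K p m k))$s
          + (1 - p$s) * (K *v (\<Sum>k<N. cond_prob_F K p (Suc m) k))$s"
      using cond_prob_F_partial_sum_Suc[OF stochastic, where w = "\<lambda>_. 1"] by simp
    also have "\<dots> \<le> p$s * 1 + (1 - p$s) * 1"
      using IH_m Suc.IH p_pos[of s] p_less_1[of s]
      by (intro add_mono mult_left_mono stochastic_matrix_mult_vec_le[OF stochastic])
        (simp_all del: sum.lessThan_Suc)
    finally show ?case by simp
  qed simp
qed

text \<open>\<open>c\<close> bounds the mean number \<open>(1 - p)/p\<close> of failures before a single success.\<close>
lemma cond_prob_F_mean_partial_sum_le: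
  assumes "0 \<le> c" and "\<And>s. 1 - p$s \<le> c * p$s"
  shows "(\<Sum>k<N. real k * cond_prob_F K p m k $ s) \<le> real m * c"
proof (induction m arbitrary: N s)
  case 0
  have "(\<Sum>k<N. real k * cond_prob_F K p 0 k $ s) = 0"
    by (intro sum.neutral) (simp add: cond_prob_F_0)
  then show ?case by simp
next
  case (Suc m)
  note IH_m = Suc.IH
  show ?case
  proof (induction N arbitrary: s)
    case (Suc N)
    have "(\<Sum>k<N. real (Suc k) * cond_prob_F K p (Suc m) k $ j) \<le> real (Suc m) * c + 1" for j
      using Suc.IH[of j] cond_prob_F_partial_sum_le_1[where N=N and m="Suc m" and s=j]
      by (simp add: distrib_right sum.distrib)
    then have B: "(K *v (\<Sum>k<N. real (Suc k) *\<^sub>R cond_prob_F K p (Suc m) k))$s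
        \<le> real (Suc m) * c + 1"
      by (intro stochastic_matrix_mult_vec_le[OF stochastic]) simp
    have A: "(K *v (\<Sum>k<Suc N. real k *\<^sub>R cond_prob_F K p m k))$s \<le> real m * c"
      using IH_m
      by (intro stochastic_matrix_mult_vec_le[OF stochastic]) (simp del: sum.lessThan_Suc)
    have "(\<Sum>k<Suc N. real k * cond_prob_F K p (Suc m) k $ s)
        = p$s * (K *v (\<Sum>k<Suc N. real k *\<^sub>R cond_prob_F K p m k))$s
          + (1 - p$s) * (K *v (\<Sum>k<N. real (Suc k) *\<^sub>R cond_prob_F K p (Suc m) k))$s"
      by (rule cond_prob_F_partial_sum_Suc[OF stochastic])
    also have "\<dots> \<le> p$s * (real m * c) + (1 - p$s) * (real (Suc m) * c + 1)"
      using A B p_pos[of s] p_less_1[of s] by (intro add_mono mult_left_mono) simp_all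
    also have "\<dots> \<le> real (Suc m) * c"
      using assms(2)[of s] by (simp add: algebra_simps)
    finally show ?case .
  qed (simp add: assms(1))
qed

lemma cond_prob_F_summable: "summable (\<lambda>k. cond_prob_F K p m k $ s)"
  by (rule bounded_imp_summable[where B=1])
    (simp_all add: cond_prob_F_nonneg cond_prob_F_partial_sum_le_1 flip: lessThan_Suc_atMost
      del: sum.lessThan_Suc)

lemma cond_prob_F_mean_summable: "summable (\<lambda>k. real k * cond_prob_F K p m k $ s)"
proof -
  define c where "c = (MAX s. 1 / p$s)"
  have c: "1 / p$s \<le> c" for s by (simp add: c_def)
  have "1 - p$s \<le> c * p$s" for s
  proof -
    have "1 \<le> c * p$s" using c[of s] p_pos[of s] by (simp add: divide_le_eq)
    with p_pos[of s] show ?thesis by linarith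
  qed
  moreover have "0 \<le> c"
  proof -
    have "0 < 1 / p$s" using p_pos[of s] by simp
    with c[of s] show ?thesis by linarith
  qed
  ultimately show ?thesis
    by (intro bounded_imp_summable[where B="real m * c"])
      (simp_all add: cond_prob_F_nonneg cond_prob_F_mean_partial_sum_le flip: lessThan_Suc_atMost
        del: sum.lessThan_Suc)
qed

lemma cond_prob_F_sums_1: "(\<lambda>k. cond_prob_F K p m k $ s) sums 1"
proof (induction m arbitrary: s)
  case 0
  show ?case using sums_single[of 0 "\<lambda>_. 1::real"] by (simp add: cond_prob_F_0)
next
  case (Suc m)
  define u where "u = (\<chi> j. \<Sum>k. cond_prob_F K p (Suc m) k $ j)"
  have u: "(\<lambda>k. cond_prob_F K p (Suc m) k $ j) sums u$j" for j
    using cond_prob_F_summable by (simp add: u_def summable_sums)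
  have "(\<lambda>k. 1 * cond_prob_F K p (Suc m) k $ j)
      sums (p$j * (K *v 1)$j + (1 - p$j) * (K *v u)$j)" for j
    by (rule cond_prob_F_Suc_sums[OF stochastic]) (simp_all add: Suc.IH u)
  then have "u$j = p$j + (1 - p$j) * (K *v u)$j" for j
    using sums_unique2[OF u] stochastic_matrix_mult_vec_const[OF stochastic, of 1] by simp
  then have "first_step_eq K p (1 - u) 0"
    using stochastic_matrix_mult_vec_const[OF stochastic, of 1]
    by (simp add: first_step_eq_iff matrix_vector_mult_diff_distrib algebra_simps)
  from first_step_eq_0_unique[OF this] have "u = 1" by simp
  with u show ?case by simp
qed

lemma cond_expect_F_sums: "(\<lambda>k. real k * cond_prob_F K p m k $ s) sums cond_expect_F K p m $ s"
  using cond_prob_F_mean_summable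
  by (simp add: cond_expect_F_def expect_F_def cond_prob_F_def summable_sums)

lemma expect_F_eq_inner:
  assumes "prob_vector \<eta>"
  shows "expect_F K p \<eta> m = \<eta> \<bullet> cond_expect_F K p m"
proof -
  have "(\<lambda>k. \<Sum>j\<in>UNIV. \<eta>$j * (real k * cond_prob_F K p m k $ j))
      sums (\<Sum>j\<in>UNIV. \<eta>$j * cond_expect_F K p m $ j)"
    by (intro sums_sum sums_mult cond_expect_F_sums)
  moreover have "real k * prob_F_eq K p \<eta> m k
      = (\<Sum>j\<in>UNIV. \<eta>$j * (real k * cond_prob_F K p m k $ j))" for k
    using assms
    by (simp add: prob_F_eq_eq_inner prob_vector_def inner_vec_def sum_distrib_left mult_ac)
  ultimately show ?thesis by (simp add: expect_F_def inner_vec_def sums_iff)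
qed

lemma cond_expect_F_0: "cond_expect_F K p 0 = 0"
proof -
  have "(\<lambda>k. real k * cond_prob_F K p 0 k $ s) = (\<lambda>_. 0)" for s
    by (simp add: cond_prob_F_0 fun_eq_iff)
  then have "(\<lambda>k. real k * cond_prob_F K p 0 k $ s) sums 0" for s by simp
  then show ?thesis using sums_unique2[OF cond_expect_F_sums] by (simp add: vec_eq_iff)
qed

lemma cond_expect_F_Suc:
  "cond_expect_F K p (Suc m) $ s
    = p$s * (K *v cond_expect_F K p m)$s + (1 - p$s) * ((K *v cond_expect_F K p (Suc m))$s + 1)"
proof -
  have "(\<lambda>k. real (Suc k) * cond_prob_F K p (Suc m) k $ j)
      sums (cond_expect_F K p (Suc m) + 1)$j" for j
    using sums_add[OF cond_expect_F_sums cond_prob_F_sums_1] by (simp add: algebra_simps)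
  from cond_prob_F_Suc_sums[OF stochastic cond_expect_F_sums this]
  have "(\<lambda>k. real k * cond_prob_F K p (Suc m) k $ s) sums
      (p$s * (K *v cond_expect_F K p m)$s + (1 - p$s) * ((K *v cond_expect_F K p (Suc m))$s + 1))"
    using stochastic_matrix_mult_vec_const[OF stochastic, of 1]
    by (simp add: matrix_vector_right_distrib)
  then show ?thesis using sums_unique2[OF cond_expect_F_sums] by simp
qed

end

section \<open>Exponential convergence\<close>

lemma abs_inner_prob_vector_le:
  assumes "prob_vector \<eta>" and "\<And>i. \<bar>x$i\<bar> \<le> b"
  shows "\<bar>\<eta> \<bullet> x\<bar> \<le> b"
proof -
  have "\<bar>\<eta> \<bullet> x\<bar> \<le> (\<Sum>i\<in>UNIV. \<eta>$i * \<bar>x$i\<bar>)"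
    unfolding inner_vec_def using assms(1)
    by (auto simp: prob_vector_def abs_mult intro: order_trans[OF sum_abs])
  also have "\<dots> \<le> (\<Sum>i\<in>UNIV. \<eta>$i * b)"
    using assms by (intro sum_mono mult_left_mono) (auto simp: prob_vector_def)
  also have "\<dots> = b" using assms(1) by (simp add: prob_vector_def flip: sum_distrib_right)
  finally show ?thesis .
qed

lemma inner_prob_vector_vec: "prob_vector \<eta> \<Longrightarrow> \<eta> \<bullet> vec c = c"
  by (simp add: prob_vector_def inner_vec_def flip: sum_distrib_right)

lemma ratio_tendsto_1_of_bounded_deviation:
  assumes "\<And>n. \<bar>a n - real n\<bar> \<le> B"
  shows "(\<lambda>n. a n / real n) \<longlonglongrightarrow> 1"
proof -
  have "(\<lambda>n. (a n - real n) / real n) \<longlonglongrightarrow> 0"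
  proof (rule Lim_null_comparison)
    show "\<forall>\<^sub>F n in sequentially. norm ((a n - real n) / real n) \<le> B / real n"
      using assms by (intro always_eventually allI) (simp add: abs_divide divide_right_mono)
    show "(\<lambda>n. B / real n) \<longlonglongrightarrow> 0"
      by (rule tendsto_divide_0[OF tendsto_const
          filterlim_at_top_imp_at_infinity[OF filterlim_real_sequentially]])
  qed
  then have "(\<lambda>n. 1 + (a n - real n) / real n) \<longlonglongrightarrow> 1"
    using tendsto_add[OF tendsto_const] by fastforce
  moreover have "\<forall>\<^sub>F n in sequentially. 1 + (a n - real n) / real n = a n / real n"
    using eventually_gt_at_top[of 0] by eventually_elim (simp add: field_simps)
  ultimately show ?thesis by (rule Lim_transform_eventually)
qed

lemma power_eq_exp_ln: "0 < q \<Longrightarrow> q ^ n = exp (- (- ln q) * real n)"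
  by (simp add: exp_of_nat_mult mult.commute)

context bernoulli_chain
begin

lemma first_step_eq_cond_expect_F_deviation:
  assumes "r - K *v r = 1 - 2 *\<^sub>R p"
  shows "first_step_eq K p (cond_expect_F K p (Suc m) - vec (real (Suc m)) - r)
    (cond_expect_F K p m - vec (real m) - r)"
  unfolding first_step_eq_iff
proof
  fix i
  have "r$i - (K *v r)$i = 1 - 2 * p$i"
    using arg_cong[OF assms, of "\<lambda>v. v$i"] by simp
  with cond_expect_F_Suc[of m i]
  show "(cond_expect_F K p (Suc m) - vec (real (Suc m)) - r)$i
    = (1 - p$i) * (K *v (cond_expect_F K p (Suc m) - vec (real (Suc m)) - r))$i
      + p$i * (K *v (cond_expect_F K p m - vec (real m) - r))$i"
    by (simp add: matrix_vector_mult_diff_distrib stochastic_matrix_mult_vec_const[OF stochastic]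
        algebra_simps; linarith)
qed

lemma cond_expect_F_deviation_bound:
  assumes "stationary_dist K \<mu>" and "\<mu> \<bullet> p = 1/2" and "\<And>i. (i, s) \<in> (step_rel K)\<^sup>+"
  obtains q B where "0 < q" and "q < 1"
    and "\<And>m i. \<bar>(cond_expect_F K p m - vec (real m) - r_tilde K p \<mu>)$i\<bar> \<le> q ^ m * B"
proof -
  define d where "d m = cond_expect_F K p m - vec (real m) - r_tilde K p \<mu>" for m
  have step: "first_step_eq K p (d (Suc m)) (d m)" for m
    unfolding d_def
    by (rule first_step_eq_cond_expect_F_deviation
        [OF r_tilde_poisson(1)[OF stochastic assms(1,3,2)]])
  have stat: "\<mu> v* K = \<mu>" using assms(1) by (simp add: stationary_dist_def)
  have conserved: "success_weight K p \<mu> \<bullet> d m = 0" for m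
  proof (induction m)
    case 0
    show ?case
      using r_tilde_poisson(2)[OF stochastic assms(1,3,2)] by (simp add: d_def cond_expect_F_0)
  next
    case (Suc m)
    then show ?case using stationary_first_step_eq_success_weight[OF stat step] by simp
  qed
  have w_nonneg: "0 \<le> success_weight K p \<mu> $ j" for j
    using assms(1) p_pos
    by (intro success_weight_nonneg[OF stochastic]) (auto simp: stationary_dist_def less_imp_le)
  have w_pos: "0 < success_weight K p \<mu> \<bullet> 1"
    using assms(2) by (simp add: success_weight_inner_one[OF stochastic])
  obtain q where "0 < q" and "q < 1"
    and contract: "\<And>y x. first_step_eq K p y x \<Longrightarrow> oscillation y \<le> q * oscillation x"
    by (rule first_step_eq_oscillation_contract[OF assms(3)], rule that)
  have osc: "oscillation (d m) \<le> q ^ m * oscillation (d 0)" for m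
  proof (induction m)
    case (Suc m)
    have "oscillation (d (Suc m)) \<le> q * oscillation (d m)" by (rule contract[OF step])
    also have "\<dots> \<le> q * (q ^ m * oscillation (d 0))"
      using Suc.IH \<open>0 < q\<close> by (simp add: mult_left_mono)
    finally show ?case by simp
  qed simp
  have "\<bar>d m $ i\<bar> \<le> q ^ m * oscillation (d 0)" for m i
  proof -
    obtain j where "d m $ j \<le> 0"
      by (rule nonpos_componentE[OF w_nonneg w_pos conserved], rule that)
    moreover obtain k where "(- d m) $ k \<le> 0"
      by (rule nonpos_componentE[OF w_nonneg w_pos, of "- d m"],
          simp add: inner_minus_right conserved, rule that)
    ultimately have "\<bar>d m $ i\<bar> \<le> oscillation (d m)" by (intro abs_le_oscillation) auto
    with osc[of m] show ?thesis by linarith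
  qed
  with that[of q "oscillation (d 0)"] \<open>0 < q\<close> \<open>q < 1\<close> show ?thesis by (simp add: d_def)
qed

lemma expect_F_exponential_bound:
  assumes "stationary_dist K \<mu>" and "\<mu> \<bullet> p = 1/2" and "\<And>i. (i, s) \<in> (step_rel K)\<^sup>+"
  obtains c1 c2 where "0 < c1" and "0 < c2"
    and "\<And>n \<eta>. prob_vector \<eta> \<Longrightarrow>
      \<bar>expect_F K p \<eta> (n + 1) - real n - (1 + \<eta> \<bullet> r_tilde K p \<mu>)\<bar> \<le> c1 * exp (- c2 * real n)"
proof -
  obtain q B where q: "0 < q" "q < 1"
    and dev: "\<And>m i. \<bar>(cond_expect_F K p m - vec (real m) - r_tilde K p \<mu>)$i\<bar> \<le> q ^ m * B"
    by (rule cond_expect_F_deviation_bound[OF assms], rule that)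
  have "0 \<le> B" using dev[of 0 s] by (simp del: vector_minus_component)
  have bound: "\<bar>expect_F K p \<eta> (n + 1) - real n - (1 + \<eta> \<bullet> r_tilde K p \<mu>)\<bar>
      \<le> (B + 1) * exp (- (- ln q) * real n)" if \<eta>: "prob_vector \<eta>" for \<eta> n
  proof -
    have "\<bar>expect_F K p \<eta> (n + 1) - real n - (1 + \<eta> \<bullet> r_tilde K p \<mu>)\<bar>
        = \<bar>\<eta> \<bullet> (cond_expect_F K p (Suc n) - vec (real (Suc n)) - r_tilde K p \<mu>)\<bar>"
      using \<eta> by (simp add: expect_F_eq_inner inner_diff_right inner_prob_vector_vec)
    also have "\<dots> \<le> q ^ Suc n * B" by (rule abs_inner_prob_vector_le[OF \<eta> dev])
    also have "\<dots> \<le> q ^ n * (B + 1)"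
      using q \<open>0 \<le> B\<close> by (intro mult_mono power_decreasing) auto
    finally show ?thesis using q by (simp add: power_eq_exp_ln mult.commute)
  qed
  have "0 < B + 1" and "0 < - ln q" using q \<open>0 \<le> B\<close> by auto
  from that[OF this bound] show ?thesis .
qed

end

theorem proposition4p1:
  fixes K :: "real^'n^'n" and \<mu> p :: "real^'n"
  assumes "stochastic_matrix K"
    and "unique_closed_irreducible K"
    and "stationary_dist K \<mu>"
    and "\<forall>i. 0 < p$i \<and> p$i < 1"
    and "\<mu> \<bullet> p = 1/2"
  shows "(\<forall>\<eta>. prob_vector \<eta> \<longrightarrow>
            ((\<lambda>n. expect_F K p \<eta> (n + 1) / real n) \<longlonglongrightarrow> 1))
       \<and> (\<exists>c1 c2. c1 > 0 \<and> c2 > 0 \<and>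
            (\<forall>n::nat. \<forall>\<eta>. prob_vector \<eta> \<longrightarrow>
               \<bar>expect_F K p \<eta> (n + 1) - real n - (1 + \<eta> \<bullet> r_tilde K p \<mu>)\<bar>
                 \<le> c1 * exp (- c2 * real n)))"
proof -
  obtain s where reach: "\<And>i. (i, s) \<in> (step_rel K)\<^sup>+"
    using unique_closed_irreducible_reachable_state[OF assms(1,2)] by blast
  interpret bernoulli_chain K p
    using assms(1,4) by unfold_locales auto
  obtain c1 c2 where "0 < c1" and "0 < c2"
    and bound: "\<And>n \<eta>. prob_vector \<eta> \<Longrightarrow>
      \<bar>expect_F K p \<eta> (n + 1) - real n - (1 + \<eta> \<bullet> r_tilde K p \<mu>)\<bar> \<le> c1 * exp (- c2 * real n)"
    by (rule expect_F_exponential_bound[OF assms(3,5) reach], rule that)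
  have "(\<lambda>n. expect_F K p \<eta> (n + 1) / real n) \<longlonglongrightarrow> 1" if "prob_vector \<eta>" for \<eta>
  proof (rule ratio_tendsto_1_of_bounded_deviation)
    fix n
    have "c1 * exp (- c2 * real n) \<le> c1"
      using \<open>0 < c1\<close> \<open>0 < c2\<close> by (intro mult_left_le) (simp_all add: zero_le_mult_iff)
    with bound[OF that, of n]
    show "\<bar>expect_F K p \<eta> (n + 1) - real n\<bar> \<le> c1 + \<bar>1 + \<eta> \<bullet> r_tilde K p \<mu>\<bar>" by arith
  qed
  with \<open>0 < c1\<close> \<open>0 < c2\<close> bound show ?thesis by blast
qed

end
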